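(* For $d\in[6.74,7.5]$ let $x(3,d)$ be the unique solution of $\Psi_d(x)=x$ in $[\frac38,\frac12]$ and set $\Phi^\star(d)=\Phi_3(d,x(3,d))$. Then $d\mapsto\Phi^\star(d)$ is continuous on $[6.74,7.5]$, $\Phi^\star(6.74)>0$ and $\Phi^\star(7.5)<0$.
   Context: $\hat\Psi(x)=\frac{1-2x^{2}}{1-x^{2}}$, $\dot\Psi(v)=\frac{1-v^{d-1}}{2-v^{d-1}}$, $\Psi_d=\dot\Psi\circ\hat\Psi$; $\Phi_3(d,x)=-\log(1-x)-d(\frac23-d^{-1})\log(1-2x^3)+(d-1)\log(1-x^{2})$. (Existence and uniqueness of $x(3,d)$ for these $d$ is known.) *)

theory Defs
  imports "HOL-Analysis.Analysis"
begin

definition Psi_hat :: "real \<Rightarrow> real" where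
  "Psi_hat x = (1 - 2 * x^2) / (1 - x^2)"

definition Psi_dot :: "real \<Rightarrow> real \<Rightarrow> real" where
  "Psi_dot d v = (1 - v powr (d - 1)) / (2 - v powr (d - 1))"

definition Psi :: "real \<Rightarrow> real \<Rightarrow> real" where
  "Psi d x = Psi_dot d (Psi_hat x)"

definition Phi3 :: "real \<Rightarrow> real \<Rightarrow> real" where
  "Phi3 d x = - ln (1 - x) - d * (2/3 - 1/d) * ln (1 - 2 * x^3) + (d - 1) * ln (1 - x^2)"

definition xfix :: "real \<Rightarrow> real" where
  "xfix d = (THE x. x \<in> {3/8..1/2} \<and> Psi d x = x)"

definition Phi_star :: "real \<Rightarrow> real" where
  "Phi_star d = Phi3 d (xfix d)"

end

theory Submission
  imports Defs
begin

text \<open>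
  The graph of \<open>d \<mapsto> x(3,d)\<close> is the zero set of the continuous map
  \<open>(d, x) \<mapsto> \<Psi>\<^sub>d(x) - x\<close> on a compact box, hence closed; a map into a compact set with
  closed graph is continuous, and so is \<open>\<Phi>\<^sup>\<star>\<close>.
  For the signs, the intermediate value theorem together with uniqueness traps \<open>x(3,6.74)\<close> in
  \<open>[25/56, 1/2]\<close> and \<open>x(3,7.5)\<close> in \<open>[15/32, 8/17]\<close>. On the first interval
  \<open>\<Phi>\<^sub>3(6.74, \<cdot>)\<close> is increasing and positive at the left end; on the second, bounding each
  logarithm in \<open>\<Phi>\<^sub>3(7.5, \<cdot>)\<close> monotonically gives a negative upper bound. Every
  numerical comparison with a rational power \<open>v powr (p/q)\<close> is decided by raising both sides to
  the \<open>q\<close>-th power.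
\<close>

lemma continuous_on_unique_fixpoint:
  fixes f :: "'a::euclidean_space \<Rightarrow> 'b::euclidean_space \<Rightarrow> 'b"
  assumes "closed S" "compact T"
    and f: "continuous_on (S \<times> T) (\<lambda>p. f (fst p) (snd p))"
    and g: "\<And>x. x \<in> S \<Longrightarrow> g x \<in> T \<and> f x (g x) = g x"
    and unique: "\<And>x y. x \<in> S \<Longrightarrow> y \<in> T \<Longrightarrow> f x y = y \<Longrightarrow> g x = y"
  shows "continuous_on S g"
proof (rule continuous_from_closed_graph)
  have "(\<lambda>x. (x, g x)) ` S = {p \<in> S \<times> T. f (fst p) (snd p) - snd p = 0}"
    using g unique by force
  moreover have "closed (S \<times> T)"
    using assms by (simp add: closed_Times compact_imp_closed)
  then have "closed {p \<in> S \<times> T. f (fst p) (snd p) - snd p = 0}"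
    using f by (intro continuous_closed_preimage_constant continuous_intros)
  ultimately show "closed ((\<lambda>x. (x, g x)) ` S)"
    by simp
qed (use assms in auto)

lemma fixpoint_between:
  fixes f :: "real \<Rightarrow> real"
  assumes "continuous_on {a..b} f" "a \<le> b" "a \<le> f a" "f b \<le> b"
  shows "\<exists>x\<in>{a..b}. f x = x"
proof -
  have "continuous_on {a..b} (\<lambda>x. f x - x)"
    using assms(1) by (intro continuous_intros)
  then obtain x where "a \<le> x" "x \<le> b" "f x - x = 0"
    using IVT2'[of "\<lambda>x. f x - x" b 0 a] assms by auto
  then show ?thesis
    by auto
qed

lemma powr_rat_power:
  fixes x :: real
  assumes "0 < x" "0 < q"
  shows "(x powr (real p / real q)) ^ q = x ^ p"
  using assms by (simp add: powr_realpow [symmetric] powr_powr)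

lemma powr_rat_le_iff:
  fixes x r :: real
  assumes "0 < x" "0 \<le> r" "0 < q"
  shows "x powr (real p / real q) \<le> r \<longleftrightarrow> x ^ p \<le> r ^ q"
  using assms powr_rat_power [OF assms(1,3), of p] by (metis power_mono_iff powr_ge_zero)

lemma powr_rat_ge_iff:
  fixes x r :: real
  assumes "0 < x" "0 \<le> r" "0 < q"
  shows "r \<le> x powr (real p / real q) \<longleftrightarrow> r ^ q \<le> x ^ p"
  using assms powr_rat_power [OF assms(1,3), of p] by (metis power_mono_iff powr_ge_zero)

lemma powr_nat_add:
  fixes v :: real
  assumes "0 < v"
  shows "v powr (real n + e) = v ^ n * v powr e"
  using assms by (simp add: powr_add powr_realpow)

lemma square_le_quarter:
  fixes x :: real
  assumes "0 \<le> x" "x \<le> 1/2"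
  shows "x\<^sup>2 \<le> 1/4"
  using power_mono[OF assms(2,1), of 2] by (simp add: power_divide)

lemma Phi3_log_args_pos:
  fixes x :: real
  assumes "0 \<le> x" "x \<le> 1/2"
  shows "0 < 1 - x" "0 < 1 - x\<^sup>2" "0 < 1 - 2 * x ^ 3"
proof -
  have "x ^ 3 \<le> (1/2) ^ 3"
    using assms by (intro power_mono) auto
  then show "0 < 1 - x" "0 < 1 - x\<^sup>2" "0 < 1 - 2 * x ^ 3"
    using square_le_quarter[OF assms] assms by (simp_all add: power_divide)
qed

lemma Psi_hat_bounds:
  assumes "0 < x" "x \<le> 1/2"
  shows "0 < Psi_hat x" "Psi_hat x < 1"
  using square_le_quarter[of x] assms by (auto simp: Psi_hat_def divide_simps)

lemma Psi_hat_powr_bounds: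
  assumes "1 \<le> d" "0 < x" "x \<le> 1/2"
  shows "0 < Psi_hat x powr (d - 1)" "Psi_hat x powr (d - 1) \<le> 1"
  using Psi_hat_bounds[OF assms(2,3)] assms(1) by (auto intro: powr_le1)

lemma continuous_on_Psi:
  "continuous_on ({1..} \<times> {0<..1/2}) (\<lambda>p. Psi (fst p) (snd p))"
proof -
  let ?D = "{1..} \<times> {0<..1/2} :: (real \<times> real) set"
  have denom: "1 - (snd p)\<^sup>2 \<noteq> 0" if "p \<in> ?D" for p
    using Phi3_log_args_pos(2)[of "snd p"] that by auto
  have Psi_hat_cont: "continuous_on ?D (\<lambda>p. Psi_hat (snd p))"
    unfolding Psi_hat_def by (intro continuous_intros ballI denom)
  have Psi_hat_nz: "Psi_hat (snd p) \<noteq> 0" if "p \<in> ?D" for p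
    using Psi_hat_bounds[of "snd p"] that by auto
  have denom2: "2 - Psi_hat (snd p) powr (fst p - 1) \<noteq> 0" if "p \<in> ?D" for p
    using Psi_hat_powr_bounds[of "fst p" "snd p"] that by auto
  show ?thesis
    unfolding Psi_def Psi_dot_def
    by (intro continuous_intros ballI Psi_hat_cont Psi_hat_nz denom2)
qed

lemma Psi_le_half:
  assumes "1 \<le> d" "0 < x" "x \<le> 1/2"
  shows "Psi d x \<le> 1/2"
  using Psi_hat_powr_bounds[OF assms] by (simp add: Psi_def Psi_dot_def divide_simps)

lemma le_Psi_dot_iff:
  assumes "v powr (d - 1) < 2"
  shows "x \<le> Psi_dot d v \<longleftrightarrow> v powr (d - 1) * (1 - x) \<le> 1 - 2 * x"
  using assms by (simp add: Psi_dot_def divide_simps) (simp add: algebra_simps)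

lemma Psi_dot_le_iff:
  assumes "v powr (d - 1) < 2"
  shows "Psi_dot d v \<le> x \<longleftrightarrow> 1 - 2 * x \<le> v powr (d - 1) * (1 - x)"
  using assms by (simp add: Psi_dot_def divide_simps) (simp add: algebra_simps)

text \<open>Splitting off the integral part of the exponent \<open>6.74 - 1 = 5 + 37/50\<close> keeps the
  integer powers in the rational-power certificates small.\<close>

lemma Psi_674_lower: "25/56 \<le> Psi 6.74 (25/56)"
proof -
  define v :: real where "v = 1886/2511"
  have v: "Psi_hat (25/56) = v" "0 < v"
    by (simp_all add: Psi_hat_def v_def power_divide)
  have "v powr (37/50) \<le> 195/241"
    using powr_rat_le_iff[of v "195/241" 50 37] by (simp add: v_def power_divide)
  moreover have "v powr (6.74 - 1) = v ^ 5 * v powr (37/50)"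
    using powr_nat_add[OF v(2), of 5 "37/50"] by simp
  ultimately have "v powr (6.74 - 1) \<le> v ^ 5 * (195/241)"
    using v(2) by (simp add: mult_left_mono)
  also have "\<dots> \<le> 6/31"
    by (simp add: v_def power_divide)
  finally show ?thesis
    unfolding Psi_def v(1) by (subst le_Psi_dot_iff) auto
qed

lemma Psi_75_lower: "15/32 \<le> Psi 7.5 (15/32)"
proof -
  define v :: real where "v = 574/799"
  have v: "Psi_hat (15/32) = v" "0 < v"
    by (simp_all add: Psi_hat_def v_def power_divide)
  have "v powr (7.5 - 1) \<le> 2/17"
    using powr_rat_le_iff[of v "2/17" 2 13] by (simp add: v_def power_divide)
  then show ?thesis
    unfolding Psi_def v(1) by (subst le_Psi_dot_iff) auto
qed

lemma Psi_75_upper: "Psi 7.5 (8/17) \<le> 8/17"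
proof -
  define v :: real where "v = 161/225"
  have v: "Psi_hat (8/17) = v" "0 < v" "v < 1"
    by (simp_all add: Psi_hat_def v_def power_divide)
  have "1/9 \<le> v powr (7.5 - 1)"
    using powr_rat_ge_iff[of v "1/9" 2 13] by (simp add: v_def power_divide)
  moreover have "v powr (7.5 - 1) \<le> 1"
    using v by (simp add: powr_le1)
  ultimately show ?thesis
    unfolding Psi_def v(1) by (subst Psi_dot_le_iff) auto
qed

lemma has_real_derivative_Phi3:
  assumes "0 < 1 - x" "0 < 1 - x\<^sup>2" "0 < 1 - 2 * x ^ 3"
  shows "(Phi3 d has_real_derivative
    1 / (1 - x) + d * (2/3 - 1/d) * (6 * x\<^sup>2) / (1 - 2 * x ^ 3) - (d - 1) * (2 * x) / (1 - x\<^sup>2)) (at x)"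
  unfolding Phi3_def [abs_def] using assms
  by (auto intro!: derivative_eq_intros simp: mult_ac)

text \<open>Cleared of denominators, the derivative becomes a cubic in \<open>t = 1/2 - x\<close> whose
  coefficients make it positive for \<open>0 \<le> t \<le> 3/50\<close>.\<close>

lemma Phi3_674_deriv_nonneg:
  fixes x :: real
  assumes "11/25 \<le> x" "x \<le> 1/2"
  shows "0 \<le> 1 / (1 - x) + 6.74 * (2/3 - 1/6.74) * (6 * x\<^sup>2) / (1 - 2 * x ^ 3) - (6.74 - 1) * (2 * x) / (1 - x\<^sup>2)"
proof -
  define t where "t = 1/2 - x"
  have t: "0 \<le> t" "t \<le> 3/50"
    using assms by (auto simp: t_def)
  have args: "0 < 1 - x" "0 < 1 - x\<^sup>2" "0 < 1 - 2 * x ^ 3"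
    using Phi3_log_args_pos assms by auto
  have coeffs: "6.74 * (2/3 - 1/6.74) = (262/75::real)" "6.74 - 1 = (287/50::real)"
    by simp_all
  have "1 - x\<^sup>2 = (1 - x) * (1 + x)"
    by (simp add: algebra_simps power2_eq_square)
  then have "1 / (1 - x) + 6.74 * (2/3 - 1/6.74) * (6 * x\<^sup>2) / (1 - 2 * x ^ 3) - (6.74 - 1) * (2 * x) / (1 - x\<^sup>2)
      = (3/4 - 449/50 * t + 449/25 * t\<^sup>2 + 2 * t ^ 3) / ((1 - x\<^sup>2) * (1 - 2 * x ^ 3))"
    using args assms unfolding coeffs t_def
    by (simp add: divide_simps) (simp add: algebra_simps power2_eq_square power3_eq_cube)
  moreover have "0 \<le> 3/4 - 449/50 * t + 449/25 * t\<^sup>2 + 2 * t ^ 3"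
    using t by (simp add: add_nonneg_nonneg)
  ultimately show ?thesis
    using args by simp
qed

lemma Phi3_674_mono:
  assumes "11/25 \<le> x" "x \<le> y" "y \<le> 1/2"
  shows "Phi3 6.74 x \<le> Phi3 6.74 y"
proof (rule DERIV_nonneg_imp_increasing_open [of x y "Phi3 6.74"])
  have deriv: "(Phi3 6.74 has_real_derivative
      1 / (1 - z) + 6.74 * (2/3 - 1/6.74) * (6 * z\<^sup>2) / (1 - 2 * z ^ 3) - (6.74 - 1) * (2 * z) / (1 - z\<^sup>2)) (at z)"
    if "x \<le> z" "z \<le> y" for z :: real
    using that assms Phi3_log_args_pos[of z] by (intro has_real_derivative_Phi3) auto
  show "\<exists>D. (Phi3 6.74 has_real_derivative D) (at z) \<and> 0 \<le> D" if "x < z" "z < y" for z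
    using that assms by (blast intro: deriv Phi3_674_deriv_nonneg less_imp_le order_trans)
  show "continuous_on {x..y} (Phi3 6.74)"
    using deriv by (intro continuous_at_imp_continuous_on ballI DERIV_isCont) auto
qed (rule assms(2))

lemma Phi3_674_pos: "0 < Phi3 6.74 (25/56)"
proof -
  define A B C :: real where "A = 2511/3136" and "B = 31/56" and "C = 72183/87808"
  have pos: "0 < A" "0 < B" "0 < C"
    by (simp_all add: A_def B_def C_def)
  have "C powr (37/75) \<le> 335/369"
    using powr_rat_le_iff[of C "335/369" 75 37] by (simp add: C_def power_divide)
  then have "B * C powr (3 + 37/75) \<le> B * C ^ 3 * (335/369)"
    using powr_nat_add[OF pos(3), of 3 "37/75"] pos by simp
  also have "\<dots> < A ^ 5 * (330/389)"
    by (simp add: A_def B_def C_def power_divide)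
  also have "\<dots> \<le> A powr (5 + 37/50)"
  proof -
    have "330/389 \<le> A powr (37/50)"
      using powr_rat_ge_iff[of A "330/389" 50 37] by (simp add: A_def power_divide)
    then show ?thesis
      using powr_nat_add[OF pos(1), of 5 "37/50"] pos by simp
  qed
  finally have "ln (B * C powr (3 + 37/75)) < ln (A powr (5 + 37/50))"
    using pos by (subst ln_less_cancel_iff) auto
  then have "ln B + (3 + 37/75) * ln C < (5 + 37/50) * ln A"
    using pos by (simp add: ln_mult ln_powr)
  moreover have "Phi3 6.74 (25/56) = - ln B - (3 + 37/75) * ln C + (5 + 37/50) * ln A"
    by (simp add: Phi3_def A_def B_def C_def power_divide)
  ultimately show ?thesis
    by linarith
qed

lemma Phi3_75_neg:
  assumes "15/32 \<le> x" "x \<le> 8/17"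
  shows "Phi3 7.5 x < 0"
proof -
  have "ln (9/17) \<le> ln (1 - x)"
    using assms by simp
  moreover have "ln (3889/4913) \<le> ln (1 - 2 * x ^ 3)"
  proof -
    have "x ^ 3 \<le> (8/17) ^ 3"
      using assms by (intro power_mono) auto
    then show ?thesis
      by (simp add: power_divide)
  qed
  moreover have "ln (1 - x\<^sup>2) \<le> ln (799/1024)"
  proof -
    have "(15/32)\<^sup>2 \<le> x\<^sup>2" "x\<^sup>2 \<le> (8/17)\<^sup>2"
      using assms by (intro power_mono; simp)+
    then show ?thesis
      by (simp add: power_divide)
  qed
  moreover have "13 * ln (799/1024::real) < 2 * ln (9/17) + 8 * ln (3889/4913)"
  proof -
    have "ln ((799/1024::real) ^ 13) < ln ((9/17) ^ 2 * (3889/4913) ^ 8)"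
      by (simp add: power_divide)
    then show ?thesis
      by (simp add: ln_mult ln_realpow)
  qed
  moreover have "Phi3 7.5 x = - ln (1 - x) - 4 * ln (1 - 2 * x ^ 3) + 13/2 * ln (1 - x\<^sup>2)"
    by (simp add: Phi3_def)
  ultimately show ?thesis
    by linarith
qed

context
  assumes fixpoint_unique: "\<forall>d\<in>{6.74..7.5::real}. \<exists>!x. x \<in> {3/8..1/2} \<and> Psi d x = x"
begin

lemma xfix_fixpoint:
  assumes "d \<in> {6.74..7.5}"
  shows "xfix d \<in> {3/8..1/2} \<and> Psi d (xfix d) = xfix d"
  using theI' [OF fixpoint_unique [rule_format, OF assms]] unfolding xfix_def .

lemma xfix_eqI:
  assumes "d \<in> {6.74..7.5}" "x \<in> {3/8..1/2}" "Psi d x = x"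
  shows "xfix d = x"
  unfolding xfix_def using the1_equality [OF fixpoint_unique [rule_format, OF assms(1)]] assms(2,3) by blast

lemma xfix_between:
  assumes "d \<in> {6.74..7.5}" "3/8 \<le> a" "a \<le> b" "b \<le> 1/2" "a \<le> Psi d a" "Psi d b \<le> b"
  shows "xfix d \<in> {a..b}"
proof -
  have "continuous_on {a..b} (\<lambda>x. Psi (fst (d, x)) (snd (d, x)))"
    using assms by (intro continuous_on_compose2 [OF continuous_on_Psi] continuous_intros) auto
  then have "continuous_on {a..b} (Psi d)"
    by simp
  then obtain x where "x \<in> {a..b}" "Psi d x = x"
    using fixpoint_between[of a b "Psi d"] assms by auto
  moreover have "xfix d = x"
    using assms \<open>x \<in> {a..b}\<close> \<open>Psi d x = x\<close> by (intro xfix_eqI) auto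
  ultimately show ?thesis
    by simp
qed

lemma continuous_on_xfix: "continuous_on {6.74..7.5} xfix"
proof (rule continuous_on_unique_fixpoint)
  show "continuous_on ({6.74..7.5} \<times> {3/8..1/2}) (\<lambda>p. Psi (fst p) (snd p))"
    by (rule continuous_on_subset [OF continuous_on_Psi]) auto
qed (use xfix_fixpoint xfix_eqI in auto)

lemma continuous_on_Phi_star: "continuous_on {6.74..7.5} Phi_star"
proof -
  have args_nz: "1 - xfix d \<noteq> 0" "1 - 2 * xfix d ^ 3 \<noteq> 0" "1 - (xfix d)\<^sup>2 \<noteq> 0" "d \<noteq> 0"
    if "d \<in> {6.74..7.5}" for d
    using Phi3_log_args_pos[of "xfix d"] xfix_fixpoint [OF that] that by auto
  show ?thesis
    unfolding Phi_star_def Phi3_def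
    by (intro continuous_intros continuous_on_xfix ballI args_nz)
qed

end

theorem lemma4p2:
  assumes "\<forall>d\<in>{6.74..7.5::real}. \<exists>!x. x \<in> {3/8..1/2} \<and> Psi d x = x"
  shows "continuous_on {6.74..7.5} Phi_star \<and> Phi_star 6.74 > 0 \<and> Phi_star 7.5 < 0"
proof (intro conjI)
  show "continuous_on {6.74..7.5} Phi_star"
    by (rule continuous_on_Phi_star [OF assms])
  have "xfix 6.74 \<in> {25/56..1/2}"
    by (rule xfix_between [OF assms]) (use Psi_674_lower Psi_le_half [of "6.74" "1/2"] in auto)
  then show "Phi_star 6.74 > 0"
    unfolding Phi_star_def using Phi3_674_pos Phi3_674_mono [of "25/56" "xfix 6.74"] by auto
  have "xfix 7.5 \<in> {15/32..8/17}"
    by (rule xfix_between [OF assms]) (use Psi_75_lower Psi_75_upper in auto)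
  then show "Phi_star 7.5 < 0"
    unfolding Phi_star_def using Phi3_75_neg by simp
qed

end
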